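(* For any subset $S\subseteq V$ with $T\subseteq S$ and $|S|\le 0.49n$, we have $\hat c(\delta_{\hat G}(S))\ge \hat c(\delta_{\hat G}(S\cup V_T))$.
   Context: All logarithms are base 2. Let $n$ be a large even integer, $V$ a set of $n$ vertices, $G=(V,E)$ a 10-regular multigraph on $V$ (the union of 10 perfect matchings); $\mathrm{dist}_G$ is hop distance. Fix a small constant $\varepsilon>0$, $\alpha=\frac{\log 5}{\log 5+1-\varepsilon}$, and a terminal set $T\subseteq V$ of size $\lfloor n/2^{(\log n)^\alpha}\rfloor$. For $i\ge 0$ let $N_i=\{u:\min_{t\in T}\mathrm{dist}_G(u,t)=i\}$ and $B_i=N_0\cup\dots\cup N_i$; let $m=\lfloor 10n/(\log n)^\alpha\rfloor$, $r=\min\{i:|B_i|\ge 2m\}-1$ and $V_T=B_r$. Let $E_{r+1}$ be the set of edges between $N_r$ and $N_{r+1}$. Build an edge set $E_T$ with values $c'$: for each $u\in N_r$, let $E_u$ be the set of edges of $E_{r+1}$ incident to $u$, pick an arbitrary edge $e_u$ from $u$ to a vertex of $N_{r-1}$, and add $e_u$ to $E_T$ with $c'(e_u)=|E_u|$; then for $i=r-1,\dots,1$ in turn, for each $u\in N_i$ let $E_u$ be the set of edges currently in $E_T$ incident to $u$, pick an arbitrary edge $e_u$ from $u$ to a vertex of $N_{i-1}$, and add it to $E_T$ with $c'(e_u)=\sum_{e\in E_u}c'(e)$. Define $\hat G=(V,\hat E,\hat c)$ by $\hat E=E\setminus E'$ where $E'$ is the set of edges of $G$ with both endpoints in $V_T$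 that are not in $E_T$; $\hat c(e)=c'(e)$ for $e\in E_T$ and $\hat c(e)=1$ otherwise. For $S\subseteq V$, $\delta_{\hat G}(S)$ is the set of edges of $\hat G$ with exactly one endpoint in $S$, and $\hat c$ of an edge set is the sum of capacities. *)

theory Defs
  imports Complex_Main
begin

text \<open>The multigraph G on V is the union of 10 perfect matchings M 0, ..., M 9,
  each given as a fixed-point-free involution on V. An edge is identified by
  the index k of its matching together with its endpoint set {u, M k u};
  thus parallel edges coming from different matchings are distinct.\<close>

definition perfect_matching :: "'a set \<Rightarrow> ('a \<Rightarrow> 'a) \<Rightarrow> bool" where
  "perfect_matching V f \<longleftrightarrow> (\<forall>u\<in>V. f u \<in> V \<and> f u \<noteq> u \<and> f (f u) = u)"

definition gedges :: "'a set \<Rightarrow> (nat \<Rightarrow> 'a \<Rightarrow> 'a) \<Rightarrow> (nat \<times> 'a set) set" where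
  "gedges V M = {(k, {u, M k u}) | k u. k < 10 \<and> u \<in> V}"

definition adjrel :: "'a set \<Rightarrow> (nat \<Rightarrow> 'a \<Rightarrow> 'a) \<Rightarrow> ('a \<times> 'a) set" where
  "adjrel V M = {(u, M k u) | u k. u \<in> V \<and> k < 10}"

definition layer :: "'a set \<Rightarrow> (nat \<Rightarrow> 'a \<Rightarrow> 'a) \<Rightarrow> 'a set \<Rightarrow> nat \<Rightarrow> 'a set" where
  "layer V M T i = {u \<in> V. (\<exists>t\<in>T. (t, u) \<in> adjrel V M ^^ i)
                          \<and> (\<forall>j<i. \<forall>t\<in>T. (t, u) \<notin> adjrel V M ^^ j)}"

definition ball :: "'a set \<Rightarrow> (nat \<Rightarrow> 'a \<Rightarrow> 'a) \<Rightarrow> 'a set \<Rightarrow> nat \<Rightarrow> 'a set" where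
  "ball V M T i = (\<Union>j\<le>i. layer V M T j)"

definition alpha :: "real \<Rightarrow> real" where
  "alpha \<epsilon> = log 2 5 / (log 2 5 + 1 - \<epsilon>)"

definition tsize :: "real \<Rightarrow> nat \<Rightarrow> nat" where
  "tsize \<epsilon> n = nat \<lfloor>real n / 2 powr ((log 2 (real n)) powr alpha \<epsilon>)\<rfloor>"

definition msize :: "real \<Rightarrow> nat \<Rightarrow> nat" where
  "msize \<epsilon> n = nat \<lfloor>10 * real n / (log 2 (real n)) powr alpha \<epsilon>\<rfloor>"

definition radius :: "'a set \<Rightarrow> (nat \<Rightarrow> 'a \<Rightarrow> 'a) \<Rightarrow> 'a set \<Rightarrow> nat \<Rightarrow> nat" where
  "radius V M T m = (LEAST i. 2 * m \<le> card (ball V M T i)) - 1"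

text \<open>The arbitrary choice of e_u is encoded by a function par: e_u is the
  edge of matching par u at u, i.e. (par u, {u, M (par u) u}).\<close>
definition tedge :: "(nat \<Rightarrow> 'a \<Rightarrow> 'a) \<Rightarrow> ('a \<Rightarrow> nat) \<Rightarrow> 'a \<Rightarrow> nat \<times> 'a set" where
  "tedge M par u = (par u, {u, M (par u) u})"

definition valid_par :: "'a set \<Rightarrow> (nat \<Rightarrow> 'a \<Rightarrow> 'a) \<Rightarrow> 'a set \<Rightarrow> nat \<Rightarrow> ('a \<Rightarrow> nat) \<Rightarrow> bool" where
  "valid_par V M T r par \<longleftrightarrow>
     (\<forall>i\<in>{1..r}. \<forall>u\<in>layer V M T i. par u < 10 \<and> M (par u) u \<in> layer V M T (i - 1))"

definition Eout :: "'a set \<Rightarrow> (nat \<Rightarrow> 'a \<Rightarrow> 'a) \<Rightarrow> 'a set \<Rightarrow> nat \<Rightarrow> (nat \<times> 'a set) set" where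
  "Eout V M T r = {e \<in> gedges V M. \<exists>a\<in>layer V M T r. \<exists>b\<in>layer V M T (r + 1). snd e = {a, b}}"

text \<open>cst ... d u: value c'(e_u) recorded after processing levels r, r-1, ..., r-d
  (level r is processed at d = 0). For u in level i < r, E_u consists of the
  edges e_w already in E_T (w in levels i+1..r) that are incident to u.\<close>
primrec cst :: "'a set \<Rightarrow> (nat \<Rightarrow> 'a \<Rightarrow> 'a) \<Rightarrow> 'a set \<Rightarrow> nat \<Rightarrow> ('a \<Rightarrow> nat) \<Rightarrow> nat \<Rightarrow> 'a \<Rightarrow> nat" where
  "cst V M T r par 0 =
     (\<lambda>u. if u \<in> layer V M T r then card {e \<in> Eout V M T r. u \<in> snd e} else 0)"
| "cst V M T r par (Suc d) =
     (\<lambda>u. if u \<in> layer V M T (r - Suc d)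
          then (\<Sum>w \<in> {w \<in> ball V M T r - ball V M T (r - Suc d). u \<in> snd (tedge M par w)}.
                  cst V M T r par d w)
          else cst V M T r par d u)"

definition cfinal :: "'a set \<Rightarrow> (nat \<Rightarrow> 'a \<Rightarrow> 'a) \<Rightarrow> 'a set \<Rightarrow> nat \<Rightarrow> ('a \<Rightarrow> nat) \<Rightarrow> 'a \<Rightarrow> nat" where
  "cfinal V M T r par = cst V M T r par (r - 1)"

definition ETree :: "'a set \<Rightarrow> (nat \<Rightarrow> 'a \<Rightarrow> 'a) \<Rightarrow> 'a set \<Rightarrow> nat \<Rightarrow> ('a \<Rightarrow> nat) \<Rightarrow> (nat \<times> 'a set) set" where
  "ETree V M T r par = tedge M par ` (ball V M T r - layer V M T 0)"

definition Ehat :: "'a set \<Rightarrow> (nat \<Rightarrow> 'a \<Rightarrow> 'a) \<Rightarrow> 'a set \<Rightarrow> nat \<Rightarrow> ('a \<Rightarrow> nat) \<Rightarrow> (nat \<times> 'a set) set" where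
  "Ehat V M T r par = gedges V M -
     {e \<in> gedges V M. snd e \<subseteq> ball V M T r \<and> e \<notin> ETree V M T r par}"

definition chat :: "'a set \<Rightarrow> (nat \<Rightarrow> 'a \<Rightarrow> 'a) \<Rightarrow> 'a set \<Rightarrow> nat \<Rightarrow> ('a \<Rightarrow> nat) \<Rightarrow> nat \<times> 'a set \<Rightarrow> nat" where
  "chat V M T r par e =
     (if e \<in> ETree V M T r par
      then cfinal V M T r par (SOME w. w \<in> ball V M T r - layer V M T 0 \<and> tedge M par w = e)
      else 1)"

definition cut :: "'a set \<Rightarrow> (nat \<Rightarrow> 'a \<Rightarrow> 'a) \<Rightarrow> 'a set \<Rightarrow> nat \<Rightarrow> ('a \<Rightarrow> nat) \<Rightarrow> 'a set \<Rightarrow> (nat \<times> 'a set) set" where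
  "cut V M T r par S = {e \<in> Ehat V M T r par. card (snd e \<inter> S) = 1}"

definition cutcap :: "'a set \<Rightarrow> (nat \<Rightarrow> 'a \<Rightarrow> 'a) \<Rightarrow> 'a set \<Rightarrow> nat \<Rightarrow> ('a \<Rightarrow> nat) \<Rightarrow> 'a set \<Rightarrow> nat" where
  "cutcap V M T r par S = (\<Sum>e \<in> cut V M T r par S. chat V M T r par e)"

end

theory Submission
  imports Defs
begin

text \<open>Enlarging S to S \<union> V_T removes from the cut every edge with both ends in V_T and
  creates new cut edges only between N_r - S and N_{r+1}; all of them have capacity 1.
  Walking from a \<in> N_r - S along the tree edges e_u towards T \<subseteq> S, one leaves the complement
  of S through a tree edge e_w with w \<notin> S and the other end of e_w in S. Such an edge
  lies in the cut of S but not in that of S \<union> V_T, and unwinding the recursion for c'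
  shows that c'(e_w) is the number of edges of E_{r+1} at the leaves (vertices of N_r)
  of the subtree below w, which includes a. So the removed capacity pays for the new edges.\<close>

lemma layer_subset: "layer V M T i \<subseteq> V"
  by (auto simp: layer_def)

lemma layer_unique:
  assumes "u \<in> layer V M T i" "u \<in> layer V M T j"
  shows "i = j"
proof (rule ccontr)
  assume "i \<noteq> j"
  then consider "i < j" | "j < i" by linarith
  then show False
    using assms unfolding layer_def by cases blast+
qed

lemma layer_0: "layer V M T 0 = T \<inter> V"
  by (auto simp: layer_def)

lemma mem_ball_iff: "u \<in> ball V M T r \<longleftrightarrow> (\<exists>j\<le>r. u \<in> layer V M T j)"
  by (auto simp: ball_def)

lemma reachable_in_layer:
  assumes "u \<in> V" "t \<in> T" "(t, u) \<in> adjrel V M ^^ n"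
  shows "\<exists>j\<le>n. u \<in> layer V M T j"
proof -
  define j where "j = (LEAST j. \<exists>t\<in>T. (t, u) \<in> adjrel V M ^^ j)"
  have "\<exists>t\<in>T. (t, u) \<in> adjrel V M ^^ j"
    unfolding j_def by (rule LeastI[of _ n]) (use assms in blast)
  moreover have "j \<le> n"
    unfolding j_def by (rule Least_le) (use assms in blast)
  moreover have "\<forall>j'<j. \<forall>t\<in>T. (t, u) \<notin> adjrel V M ^^ j'"
    using not_less_Least j_def by blast
  ultimately show ?thesis
    using assms(1) by (auto simp: layer_def)
qed

lemma matching_neighbour_layer:
  assumes "u \<in> layer V M T i" "k < 10" "perfect_matching V (M k)"
  shows "\<exists>j\<le>Suc i. M k u \<in> layer V M T j"
proof -
  from assms(1) obtain t where t: "t \<in> T" "(t, u) \<in> adjrel V M ^^ i" "u \<in> V"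
    unfolding layer_def by blast
  have "(u, M k u) \<in> adjrel V M"
    using t(3) assms(2) by (auto simp: adjrel_def)
  with t(2) have "(t, M k u) \<in> adjrel V M ^^ Suc i"
    by (rule relpow_Suc_I)
  moreover have "M k u \<in> V"
    using assms(3) t(3) unfolding perfect_matching_def by blast
  ultimately show ?thesis
    using reachable_in_layer[OF _ t(1)] by blast
qed

lemma sum_UN_le:
  fixes f :: "'b \<Rightarrow> nat"
  assumes "finite I" "\<And>i. i \<in> I \<Longrightarrow> finite (A i)"
  shows "sum f (\<Union>i\<in>I. A i) \<le> (\<Sum>i\<in>I. sum f (A i))"
  using assms
proof (induction I rule: finite_induct)
  case (insert x I)
  then have "finite (A x)" "finite (\<Union>i\<in>I. A i)"
    by auto
  then have "sum f (\<Union>i\<in>insert x I. A i) \<le> sum f (A x) + sum f (\<Union>i\<in>I. A i)"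
    by (simp add: sum_Un_nat)
  also have "\<dots> \<le> sum f (A x) + (\<Sum>i\<in>I. sum f (A i))"
    using insert by simp
  finally show ?case
    using insert by simp
qed simp

lemma finite_gedges: "finite V \<Longrightarrow> finite (gedges V M)"
proof -
  have "gedges V M = (\<lambda>(k, u). (k, {u, M k u})) ` ({..<10} \<times> V)"
    unfolding gedges_def by auto
  then show "finite V \<Longrightarrow> ?thesis"
    by simp
qed

lemma gedges_card_ends:
  assumes "e \<in> gedges V M" "\<And>k. k < 10 \<Longrightarrow> perfect_matching V (M k)"
  shows "card (snd e) = 2"
proof -
  obtain k u where e: "e = (k, {u, M k u})" "k < 10" "u \<in> V"
    using assms(1) by (auto simp: gedges_def)
  then have "M k u \<noteq> u"
    using assms(2) unfolding perfect_matching_def by blast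
  with e show ?thesis
    by auto
qed

lemma gedges_crossing_end:
  assumes "e \<in> gedges V M" "card (snd e \<inter> A) = 1"
    and "\<And>k. k < 10 \<Longrightarrow> perfect_matching V (M k)"
  obtains a where "a \<in> A" "a \<in> V" "fst e < 10" "snd e = {a, M (fst e) a}" "M (fst e) a \<notin> A"
proof -
  obtain k u where e: "e = (k, {u, M k u})" "k < 10" "u \<in> V"
    using assms(1) by (auto simp: gedges_def)
  have pm: "M k u \<in> V" "M k u \<noteq> u" "M k (M k u) = u"
    using assms(3)[OF e(2)] e(3) unfolding perfect_matching_def by blast+
  show ?thesis
  proof (cases "u \<in> A")
    case True
    then have "M k u \<notin> A"
      using assms(2) pm(2) e by (auto simp: card_insert_if split: if_splits)
    with True e show ?thesis
      by (intro that) auto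
  next
    case False
    then have "M k u \<in> A"
      using assms(2) e by (cases "M k u \<in> A") auto
    with False e pm show ?thesis
      by (intro that[of "M k u"]) auto
  qed
qed

locale bfs_tree =
  fixes V :: "'a set" and M :: "nat \<Rightarrow> 'a \<Rightarrow> 'a" and T :: "'a set" and r :: nat
    and par :: "'a \<Rightarrow> nat"
  assumes finite_V: "finite V"
    and perfect_matchings: "\<And>k. k < 10 \<Longrightarrow> perfect_matching V (M k)"
    and valid_par: "valid_par V M T r par"
begin

abbreviation "L \<equiv> layer V M T"
abbreviation "B \<equiv> ball V M T r"
abbreviation "te \<equiv> tedge M par"

definition parent :: "'a \<Rightarrow> 'a" where
  "parent w = M (par w) w"

definition out_degree :: "'a \<Rightarrow> nat" where
  "out_degree a = card {e \<in> Eout V M T r. a \<in> snd e}"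

definition subtree_leaves :: "'a \<Rightarrow> 'a set" where
  "subtree_leaves w = {a \<in> L r. \<exists>k\<le>r. (parent ^^ k) a = w}"

lemma finite_layer: "finite (L i)"
  using finite_subset[OF layer_subset finite_V] .

lemma finite_ball: "finite B"
  using finite_layer by (simp add: ball_def)

lemma finite_Eout: "finite (Eout V M T r)"
  using finite_gedges[OF finite_V] by (simp add: Eout_def)

lemma layer_in_ball: "w \<in> L j \<Longrightarrow> j \<le> r \<Longrightarrow> w \<in> B"
  unfolding mem_ball_iff by blast

lemma tree_vertex_layer:
  assumes "w \<in> B - L 0"
  obtains j where "w \<in> L j" "1 \<le> j" "j \<le> r"
proof -
  from assms have "w \<in> B"
    by blast
  then obtain j where j: "j \<le> r" "w \<in> L j"
    unfolding mem_ball_iff by blast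
  moreover have "j \<noteq> 0"
    using assms j by (cases j) auto
  ultimately show thesis
    using that by (simp add: Suc_leI)
qed

lemma parent_layer:
  assumes "u \<in> L i" "1 \<le> i" "i \<le> r"
  shows "par u < 10" "parent u \<in> L (i - 1)"
proof -
  have "i \<in> {1..r}"
    using assms by simp
  with valid_par assms(1) have "par u < 10 \<and> parent u \<in> L (i - 1)"
    unfolding valid_par_def parent_def by blast
  then show "par u < 10" "parent u \<in> L (i - 1)"
    by simp_all
qed

lemma funpow_parent_layer: "a \<in> L r \<Longrightarrow> k \<le> r \<Longrightarrow> (parent ^^ k) a \<in> L (r - k)"
proof (induction k)
  case (Suc k)
  then have "parent ((parent ^^ k) a) \<in> L (r - k - 1)"
    by (intro parent_layer) auto
  then show ?case
    by simp
qed simp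

lemma snd_tedge [simp]: "snd (te w) = {w, parent w}"
  by (simp add: tedge_def parent_def)

lemma tree_children_eq:
  assumes "i < r" "u \<in> L i"
  shows "{w \<in> B - ball V M T i. u \<in> snd (te w)} = {w \<in> L (Suc i). parent w = u}"
proof safe
  fix w assume w: "w \<in> B" "w \<notin> ball V M T i" "u \<in> snd (te w)"
  then obtain j where j: "j \<le> r" "w \<in> L j"
    by (auto simp: mem_ball_iff)
  with w(2) have "i < j"
    by (auto simp: mem_ball_iff not_le[symmetric])
  then have "u \<noteq> w"
    using layer_unique[OF j(2)] assms(2) by auto
  with w(3) show pw: "parent w = u"
    by simp
  with parent_layer(2)[OF j(2)] j(1) \<open>i < j\<close> have "j - 1 = i"
    using layer_unique[OF _ assms(2)] by simp
  with \<open>i < j\<close> have "j = Suc i"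
    by linarith
  with j(2) show "w \<in> L (Suc i)"
    by simp
next
  fix w assume w: "w \<in> L (Suc i)"
  then show "w \<in> B"
    using layer_in_ball assms(1) by simp
  show "w \<in> ball V M T i \<Longrightarrow> False"
    using layer_unique[OF w] by (fastforce simp: mem_ball_iff)
  show "parent w \<in> snd (te w)"
    by simp
qed

lemma cst_eq_sum_leaves:
  "d < r \<Longrightarrow> u \<in> L (r - d) \<Longrightarrow>
     cst V M T r par d u = (\<Sum>a\<in>{a \<in> L r. (parent ^^ d) a = u}. out_degree a)"
proof (induction d arbitrary: u)
  case 0
  then have "{a \<in> L r. a = u} = {u}"
    by auto
  with 0 show ?case
    by (simp add: out_degree_def)
next
  case (Suc d)
  let ?W = "{w \<in> L (r - d). parent w = u}"
  have "cst V M T r par (Suc d) u = (\<Sum>w\<in>?W. cst V M T r par d w)"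
    using Suc.prems tree_children_eq[of "r - Suc d" u] by (simp add: Suc_diff_Suc)
  also have "\<dots> = (\<Sum>w\<in>?W. \<Sum>a\<in>{a \<in> L r. (parent ^^ d) a = w}. out_degree a)"
    using Suc.IH Suc.prems by (intro sum.cong) auto
  also have "\<dots> = (\<Sum>w\<in>?W. \<Sum>a\<in>{a. a \<in> {a \<in> L r. (parent ^^ Suc d) a = u}
                                          \<and> (parent ^^ d) a = w}. out_degree a)"
    by (intro sum.cong refl) auto
  also have "\<dots> = (\<Sum>a\<in>{a \<in> L r. (parent ^^ Suc d) a = u}. out_degree a)"
  proof (rule sum.group)
    show "finite {a \<in> L r. (parent ^^ Suc d) a = u}" "finite ?W"
      using finite_layer by auto
    show "(parent ^^ d) ` {a \<in> L r. (parent ^^ Suc d) a = u} \<subseteq> ?W"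
      using funpow_parent_layer Suc.prems by auto
  qed
  finally show ?case .
qed

lemma cst_settled:
  assumes "u \<in> L j" "1 \<le> j" "j \<le> r" "r - j \<le> d"
  shows "cst V M T r par d u = cst V M T r par (r - j) u"
  using assms(4)
proof (induction d)
  case 0
  then show ?case
    by (simp only: le_zero_eq)
next
  case (Suc d)
  show ?case
  proof (cases "r - j = Suc d")
    case False
    with Suc.prems have "r - j \<le> d" "r - Suc d \<noteq> j"
      using assms(2) by linarith+
    then have "u \<notin> L (r - Suc d)"
      using assms(1) layer_unique[of u V M T j "r - Suc d"] by auto
    then have "cst V M T r par (Suc d) u = cst V M T r par d u"
      by (simp only: cst.simps if_False)
    with Suc.IH \<open>r - j \<le> d\<close> show ?thesis
      by simp
  qed (simp only:)
qed

lemma subtree_leaves_eq: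
  assumes "w \<in> L j" "j \<le> r"
  shows "subtree_leaves w = {a \<in> L r. (parent ^^ (r - j)) a = w}"
proof -
  have "k = r - j" if "a \<in> L r" "k \<le> r" "(parent ^^ k) a = w" for a k
    using layer_unique[OF assms(1)] funpow_parent_layer[OF that(1,2)] that(2,3) by force
  then show ?thesis
    unfolding subtree_leaves_def by (auto intro!: exI[of _ "r - j"])
qed

lemma cfinal_eq_sum_subtree_leaves:
  assumes "w \<in> B - L 0"
  shows "cfinal V M T r par w = sum out_degree (subtree_leaves w)"
proof -
  obtain j where j: "w \<in> L j" "1 \<le> j" "j \<le> r"
    using tree_vertex_layer[OF assms] .
  then have "cfinal V M T r par w = cst V M T r par (r - j) w"
    unfolding cfinal_def by (intro cst_settled) auto
  also have "\<dots> = sum out_degree {a \<in> L r. (parent ^^ (r - j)) a = w}"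
    using j by (intro cst_eq_sum_leaves) auto
  also have "\<dots> = sum out_degree (subtree_leaves w)"
    using j by (simp only: subtree_leaves_eq)
  finally show ?thesis .
qed

lemma tedge_props:
  assumes "w \<in> B - L 0"
  shows "te w \<in> gedges V M" "parent w \<in> B" "parent w \<noteq> w"
proof -
  obtain j where j: "w \<in> L j" "1 \<le> j" "j \<le> r"
    using tree_vertex_layer[OF assms] .
  note p = parent_layer[OF j]
  have "w \<in> V"
    using layer_subset[of V M T j] j(1) by blast
  with p(1) show "te w \<in> gedges V M"
    by (auto simp: tedge_def gedges_def)
  show "parent w \<in> B"
    using layer_in_ball[OF p(2)] j by simp
  show "parent w \<noteq> w"
    using layer_unique[of w V M T j "j - 1"] p(2) j by auto
qed

lemma inj_on_tedge: "inj_on te (B - L 0)"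
proof
  fix w w' assume w: "w \<in> B - L 0" and w': "w' \<in> B - L 0" and eq: "te w = te w'"
  show "w = w'"
  proof (rule ccontr)
    assume "w \<noteq> w'"
    moreover have "{w, parent w} = {w', parent w'}"
      using arg_cong[OF eq, of snd] by simp
    ultimately have "w = parent w'" "w' = parent w"
      by (auto simp: doubleton_eq_iff)
    moreover obtain j where j: "w \<in> L j" "1 \<le> j" "j \<le> r"
      using tree_vertex_layer[OF w] .
    moreover obtain j' where j': "w' \<in> L j'" "1 \<le> j'" "j' \<le> r"
      using tree_vertex_layer[OF w'] .
    ultimately have "j' = j - 1" "j = j' - 1"
      using parent_layer(2) layer_unique by metis+
    with j' show False
      by linarith
  qed
qed

lemma chat_tedge:
  assumes "w \<in> B - L 0"
  shows "chat V M T r par (te w) = sum out_degree (subtree_leaves w)"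
proof -
  have "(SOME w'. w' \<in> B - L 0 \<and> te w' = te w) = w"
    using assms inj_on_tedge by (auto intro!: some_equality dest: inj_onD)
  with assms show ?thesis
    by (simp add: chat_def ETree_def cfinal_eq_sum_subtree_leaves)
qed

lemma ETree_subset: "e \<in> ETree V M T r par \<Longrightarrow> snd e \<subseteq> B \<and> e \<in> gedges V M"
  unfolding ETree_def using tedge_props by auto

lemma chat_cut_union_ball:
  assumes "e \<in> cut V M T r par (S \<union> B)"
  shows "chat V M T r par e = 1"
proof -
  have "e \<notin> ETree V M T r par"
  proof
    assume "e \<in> ETree V M T r par"
    then have "card (snd e \<inter> (S \<union> B)) = 2"
      using ETree_subset gedges_card_ends perfect_matchings by (metis Int_absorb2 le_supI2)
    with assms show False
      by (simp add: cut_def)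
  qed
  then show ?thesis
    by (simp add: chat_def)
qed

definition Eout_outside :: "'a set \<Rightarrow> (nat \<times> 'a set) set" where
  "Eout_outside S = {e \<in> Eout V M T r. \<exists>a\<in>L r - S. a \<in> snd e}"

lemma cut_union_ball_diff_subset:
  "cut V M T r par (S \<union> B) - cut V M T r par S \<subseteq> Eout_outside S"
proof
  fix e assume e: "e \<in> cut V M T r par (S \<union> B) - cut V M T r par S"
  then have eG: "e \<in> gedges V M" and "card (snd e \<inter> (S \<union> B)) = 1"
    by (auto simp: cut_def Ehat_def)
  then obtain a where a: "a \<in> S \<union> B" "fst e < 10" "snd e = {a, M (fst e) a}"
    "M (fst e) a \<notin> S \<union> B"
    using gedges_crossing_end perfect_matchings by metis
  have "a \<notin> S"
  proof
    assume "a \<in> S"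
    then have "snd e \<inter> S = {a}"
      using a by auto
    with e show False
      by (auto simp: cut_def Ehat_def)
  qed
  with a obtain i where i: "i \<le> r" "a \<in> L i"
    by (auto simp: mem_ball_iff)
  obtain j where j: "j \<le> Suc i" "M (fst e) a \<in> L j"
    using matching_neighbour_layer[OF i(2) a(2) perfect_matchings[OF a(2)]] by blast
  have "\<not> j \<le> r"
    using layer_in_ball[OF j(2)] a(4) by blast
  with i(1) j(1) have "i = r" "j = Suc r"
    by linarith+
  with eG a(3) i(2) j(2) have "e \<in> Eout V M T r"
    unfolding Eout_def Suc_eq_plus1 by blast
  with a(3) i(2) \<open>i = r\<close> \<open>a \<notin> S\<close> show "e \<in> Eout_outside S"
    unfolding Eout_outside_def by blast
qed

context
  fixes S :: "'a set"
  assumes T_subset_S: "T \<subseteq> S"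
begin

definition exits :: "'a set" where
  "exits = {w \<in> B - S. parent w \<in> S}"

lemma exits_subset: "exits \<subseteq> B - L 0"
  unfolding exits_def layer_0 using T_subset_S by blast

lemma leaf_in_exit_subtree:
  assumes a: "a \<in> L r - S"
  shows "\<exists>w\<in>exits. a \<in> subtree_leaves w"
proof -
  have "(parent ^^ r) a \<in> S"
    using funpow_parent_layer[of a r] a T_subset_S by (auto simp: layer_0)
  with a obtain k where "k < r" "(parent ^^ k) a \<notin> S" "(parent ^^ Suc k) a \<in> S"
    using ex_least_nat_less[where P = "\<lambda>k. (parent ^^ k) a \<in> S"] by auto
  then have k: "parent ((parent ^^ k) a) \<in> S" "(parent ^^ k) a \<notin> S" "k < r"
    by simp_all
  have "(parent ^^ k) a \<in> B"
    using funpow_parent_layer[of a k] layer_in_ball a k(3) by auto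
  moreover have "a \<in> subtree_leaves ((parent ^^ k) a)"
    using a k(3) by (auto simp: subtree_leaves_def intro!: exI[of _ k])
  ultimately show ?thesis
    using k(1,2) by (auto simp: exits_def)
qed

lemma tedge_exits_subset: "te ` exits \<subseteq> cut V M T r par S - cut V M T r par (S \<union> B)"
proof
  fix e assume "e \<in> te ` exits"
  then obtain w where w: "w \<in> exits" "e = te w"
    by blast
  then have wB: "w \<in> B - L 0"
    using exits_subset by blast
  note tp = tedge_props[OF wB]
  have "e \<in> Ehat V M T r par"
    using tp w(2) wB by (auto simp: Ehat_def ETree_def)
  moreover have "snd e \<inter> S = {parent w}" "snd e \<inter> (S \<union> B) = {w, parent w}"
    using tp w wB unfolding exits_def by auto
  ultimately show "e \<in> cut V M T r par S - cut V M T r par (S \<union> B)"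
    using tp(3) by (simp add: cut_def)
qed

lemma card_Eout_outside_le: "card (Eout_outside S) \<le> sum (chat V M T r par) (te ` exits)"
proof -
  have "card (Eout_outside S) \<le> (\<Sum>a\<in>L r - S. out_degree a)"
    unfolding Eout_outside_def out_degree_def using finite_layer finite_Eout
    by (auto intro!: order.trans[OF card_mono card_UN_le])
  also have "\<dots> \<le> sum out_degree (\<Union>w\<in>exits. subtree_leaves w)"
    using leaf_in_exit_subtree finite_layer finite_ball
    by (intro sum_mono2) (auto simp: exits_def subtree_leaves_def)
  also have "\<dots> \<le> (\<Sum>w\<in>exits. sum out_degree (subtree_leaves w))"
    using finite_layer finite_ball by (intro sum_UN_le) (auto simp: exits_def subtree_leaves_def)
  also have "\<dots> = sum (chat V M T r par) (te ` exits)"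
    using exits_subset inj_on_subset[OF inj_on_tedge]
    by (simp add: sum.reindex chat_tedge subset_iff)
  finally show ?thesis .
qed

theorem cutcap_union_ball_le: "cutcap V M T r par (S \<union> B) \<le> cutcap V M T r par S"
proof -
  let ?c = "chat V M T r par"
  let ?C1 = "cut V M T r par (S \<union> B)" and ?C0 = "cut V M T r par S"
  have fin: "finite ?C1" "finite ?C0" "finite (Eout_outside S)" "finite (te ` exits)"
    using finite_gedges[OF finite_V] finite_Eout finite_ball exits_subset
    by (auto simp: cut_def Ehat_def Eout_outside_def intro: finite_subset)
  have "cutcap V M T r par (S \<union> B) = card ?C1"
    unfolding cutcap_def using chat_cut_union_ball[of _ S] by simp
  also have "\<dots> = card (?C1 \<inter> ?C0) + card (?C1 - ?C0)"
    using fin(1) by (rule card_Int_Diff)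
  also have "\<dots> \<le> sum ?c (?C1 \<inter> ?C0) + sum ?c (te ` exits)"
  proof (rule add_mono)
    show "card (?C1 \<inter> ?C0) \<le> sum ?c (?C1 \<inter> ?C0)"
      using chat_cut_union_ball[of _ S] by simp
    show "card (?C1 - ?C0) \<le> sum ?c (te ` exits)"
      using card_mono[OF fin(3) cut_union_ball_diff_subset] card_Eout_outside_le by simp
  qed
  also have "\<dots> = sum ?c ((?C1 \<inter> ?C0) \<union> te ` exits)"
    using tedge_exits_subset fin by (intro sum.union_disjoint[symmetric]) auto
  also have "\<dots> \<le> sum ?c ?C0"
    using tedge_exits_subset fin by (intro sum_mono2) auto
  finally show ?thesis
    by (simp add: cutcap_def)
qed

end

end

theorem lemma3p10:
  shows "\<exists>\<epsilon>0>0. \<forall>\<epsilon>::real. 0 < \<epsilon> \<and> \<epsilon> < \<epsilon>0 \<longrightarrow>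
    (\<exists>N::nat. \<forall>(V::'a set) (M::nat \<Rightarrow> 'a \<Rightarrow> 'a) (T::'a set) (par::'a \<Rightarrow> nat) (S::'a set).
       finite V \<and> N \<le> card V \<and> even (card V) \<and>
       (\<forall>k<10. perfect_matching V (M k)) \<and>
       T \<subseteq> V \<and> card T = tsize \<epsilon> (card V) \<and>
       (\<exists>i. 2 * msize \<epsilon> (card V) \<le> card (ball V M T i)) \<and>
       valid_par V M T (radius V M T (msize \<epsilon> (card V))) par \<and>
       T \<subseteq> S \<and> S \<subseteq> V \<and> real (card S) \<le> 0.49 * real (card V)
       \<longrightarrow> (let r = radius V M T (msize \<epsilon> (card V)) in
            cutcap V M T r par (S \<union> ball V M T r) \<le> cutcap V M T r par S))"
  by (intro exI[of _ "1::real"] conjI allI impI exI[of _ "0::nat"])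
    (auto simp: Let_def intro!: bfs_tree.cutcap_union_ball_le bfs_tree.intro)

end
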